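(* The first-order theory $T_{\mathrm{as\text{-}irr}}$ is $\aleph_0$-categorical, has no finite models, and is therefore complete.
   Context: $T_{\mathrm{as\text{-}irr}}$ is the first-order theory in the language with one binary relation $<$ consisting of: $\forall x\,\neg(x<x)$; $\forall x,y,z((x<y\wedge y<z)\rightarrow x<z)$; (Depth-at-least-3) $\exists x_0,x_1,x_2(x_0<x_1\wedge x_1<x_2)$; (Depth-at-most-3) $\neg\exists x_0,x_1,x_2,x_3(x_0<x_1\wedge x_1<x_2\wedge x_2<x_3)$; and the following extension axioms, where $L_1$ is the (first-order definable) set of minimal elements, $L_2$ the set of elements immediately succeeding (covering) an element of $L_1$, and $L_3$ the set of elements immediately succeeding an element of $L_2$: (a) for all $j,k,l\ge0$: for all distinct $x_0,\dots,x_{k-1},y_0,\dots,y_{j-1}\in L_2$ and distinct $z_0,\dots,z_{l-1}\in L_1$ there is $z\in L_1$ different from all $z_i$ with $\bigwedge_{i<k}z<x_i\wedge\bigwedge_{i<j}\neg(z<y_i)$; (b) for all $j,k,l\ge0$: for all distinct $x_0,\dots,x_{k-1},y_0,\dots,y_{j-1}\in L_2$ and distinct $z_0,\dots,z_{l-1}\in L_3$ there is $z\in L_3$ different from all $z_i$ with $\bigwedge_{i<k}x_i<z\wedge\bigwedge_{i<j}\neg(y_i<z)$; (c) for all $j,j',k,k',l\ge0$: for all distinct $x_0,\dots,x_{k-1},y_0,\dots,y_{j-1}\in L_1$, distinct $x'_0,\dots,x'_{k'-1},y'_0,\dots,y'_{j'-1}\in L_3$ and distinct $z_0,\dots,z_{l-1}\in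 L_2$ there is $z\in L_2$ different from all $z_i$ with $\bigwedge_{i<k}x_i<z\wedge\bigwedge_{i<j}\neg(y_i<z)\wedge\bigwedge_{i<k'}z<x'_i\wedge\bigwedge_{i<j'}\neg(z<y'_i)$. *)

theory Defs
  imports Main "HOL-Library.Countable_Set"
begin

datatype fm = TT | Eq nat nat | Lt nat nat | Neg fm | Conj fm fm | Ex nat fm

fun fv :: "fm \<Rightarrow> nat set" where
  "fv TT = {}"
| "fv (Eq x y) = {x, y}"
| "fv (Lt x y) = {x, y}"
| "fv (Neg p) = fv p"
| "fv (Conj p q) = fv p \<union> fv q"
| "fv (Ex x p) = fv p - {x}"

definition sentence :: "fm \<Rightarrow> bool" where
  "sentence p \<longleftrightarrow> fv p = {}"

fun sat :: "'a set \<Rightarrow> ('a \<Rightarrow> 'a \<Rightarrow> bool) \<Rightarrow> (nat \<Rightarrow> 'a) \<Rightarrow> fm \<Rightarrow> bool" where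
  "sat D R e TT = True"
| "sat D R e (Eq x y) = (e x = e y)"
| "sat D R e (Lt x y) = R (e x) (e y)"
| "sat D R e (Neg p) = (\<not> sat D R e p)"
| "sat D R e (Conj p q) = (sat D R e p \<and> sat D R e q)"
| "sat D R e (Ex x p) = (\<exists>a\<in>D. sat D R (e(x := a)) p)"

definition holds :: "'a set \<Rightarrow> ('a \<Rightarrow> 'a \<Rightarrow> bool) \<Rightarrow> fm \<Rightarrow> bool" where
  "holds D R p \<longleftrightarrow> (\<forall>e. range e \<subseteq> D \<longrightarrow> sat D R e p)"

definition is_model :: "'a set \<Rightarrow> ('a \<Rightarrow> 'a \<Rightarrow> bool) \<Rightarrow> fm set \<Rightarrow> bool" where
  "is_model D R T \<longleftrightarrow> D \<noteq> {} \<and> (\<forall>p\<in>T. holds D R p)"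

definition isomorphic :: "'a set \<Rightarrow> ('a \<Rightarrow> 'a \<Rightarrow> bool) \<Rightarrow> 'b set \<Rightarrow> ('b \<Rightarrow> 'b \<Rightarrow> bool) \<Rightarrow> bool" where
  "isomorphic D1 R1 D2 R2 \<longleftrightarrow>
     (\<exists>f. bij_betw f D1 D2 \<and> (\<forall>x\<in>D1. \<forall>y\<in>D1. R1 x y \<longleftrightarrow> R2 (f x) (f y)))"

definition Or :: "fm \<Rightarrow> fm \<Rightarrow> fm" where "Or p q = Neg (Conj (Neg p) (Neg q))"
definition Imp :: "fm \<Rightarrow> fm \<Rightarrow> fm" where "Imp p q = Neg (Conj p (Neg q))"
definition All :: "nat \<Rightarrow> fm \<Rightarrow> fm" where "All x p = Neg (Ex x (Neg p))"

definition Ands :: "fm list \<Rightarrow> fm" where "Ands ps = foldr Conj ps TT"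
definition Alls :: "nat list \<Rightarrow> fm \<Rightarrow> fm" where "Alls vs p = foldr All vs p"

definition distinctF :: "nat list \<Rightarrow> fm" where
  "distinctF vs = Ands [Neg (Eq (vs ! i) (vs ! j)). i \<leftarrow> [0..<length vs], j \<leftarrow> [0..<length vs], i < j]"

text \<open>In the following, x is the free variable and b (and b+1, b+2, ...) are bound
  variables; they are always used with x < b, so no variable capture occurs.\<close>

definition covers :: "nat \<Rightarrow> nat \<Rightarrow> nat \<Rightarrow> fm" where
  "covers a b w = Conj (Lt b a) (Neg (Ex w (Conj (Lt b w) (Lt w a))))"

definition L1f :: "nat \<Rightarrow> nat \<Rightarrow> fm" where
  "L1f x b = Neg (Ex b (Lt b x))"

definition L2f :: "nat \<Rightarrow> nat \<Rightarrow> fm" where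
  "L2f x b = Ex b (Conj (L1f b (b + 1)) (covers x b (b + 1)))"

definition L3f :: "nat \<Rightarrow> nat \<Rightarrow> fm" where
  "L3f x b = Ex b (Conj (L2f b (b + 1)) (covers x b (b + 1)))"

definition ax_irr :: fm where "ax_irr = All 0 (Neg (Lt 0 0))"

definition ax_trans :: fm where
  "ax_trans = Alls [0, 1, 2] (Imp (Conj (Lt 0 1) (Lt 1 2)) (Lt 0 2))"

definition ax_depth_ge3 :: fm where
  "ax_depth_ge3 = Ex 0 (Ex 1 (Ex 2 (Conj (Lt 0 1) (Lt 1 2))))"

definition ax_depth_le3 :: fm where
  "ax_depth_le3 = Neg (Ex 0 (Ex 1 (Ex 2 (Ex 3 (Conj (Lt 0 1) (Conj (Lt 1 2) (Lt 2 3)))))))"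

text \<open>Extension axiom (a) for parameters j, k, l. Variables: x_i = i (i<k),
  y_i = k+i (i<j), z_i = k+j+i (i<l), z = k+j+l; bound helper variables start at k+j+l+1.\<close>
definition axA :: "nat \<Rightarrow> nat \<Rightarrow> nat \<Rightarrow> fm" where
  "axA j k l = (let xs = [0..<k]; ys = [k..<k+j]; zs = [k+j..<k+j+l]; z = k+j+l; B = z+1 in
     Alls (xs @ ys @ zs)
      (Imp (Ands (map (\<lambda>v. L2f v B) (xs @ ys) @ map (\<lambda>v. L1f v B) zs @ [distinctF (xs @ ys), distinctF zs]))
           (Ex z (Ands ([L1f z B] @ map (\<lambda>v. Neg (Eq z v)) zs
                        @ map (\<lambda>v. Lt z v) xs @ map (\<lambda>v. Neg (Lt z v)) ys)))))"

definition axB :: "nat \<Rightarrow> nat \<Rightarrow> nat \<Rightarrow> fm" where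
  "axB j k l = (let xs = [0..<k]; ys = [k..<k+j]; zs = [k+j..<k+j+l]; z = k+j+l; B = z+1 in
     Alls (xs @ ys @ zs)
      (Imp (Ands (map (\<lambda>v. L2f v B) (xs @ ys) @ map (\<lambda>v. L3f v B) zs @ [distinctF (xs @ ys), distinctF zs]))
           (Ex z (Ands ([L3f z B] @ map (\<lambda>v. Neg (Eq z v)) zs
                        @ map (\<lambda>v. Lt v z) xs @ map (\<lambda>v. Neg (Lt v z)) ys)))))"

definition axC :: "nat \<Rightarrow> nat \<Rightarrow> nat \<Rightarrow> nat \<Rightarrow> nat \<Rightarrow> fm" where
  "axC j j' k k' l = (let xs = [0..<k]; ys = [k..<k+j]; xs' = [k+j..<k+j+k'];
       ys' = [k+j+k'..<k+j+k'+j']; zs = [k+j+k'+j'..<k+j+k'+j'+l];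
       z = k+j+k'+j'+l; B = z+1 in
     Alls (xs @ ys @ xs' @ ys' @ zs)
      (Imp (Ands (map (\<lambda>v. L1f v B) (xs @ ys) @ map (\<lambda>v. L3f v B) (xs' @ ys')
                  @ map (\<lambda>v. L2f v B) zs
                  @ [distinctF (xs @ ys), distinctF (xs' @ ys'), distinctF zs]))
           (Ex z (Ands ([L2f z B] @ map (\<lambda>v. Neg (Eq z v)) zs
                        @ map (\<lambda>v. Lt v z) xs @ map (\<lambda>v. Neg (Lt v z)) ys
                        @ map (\<lambda>v. Lt z v) xs' @ map (\<lambda>v. Neg (Lt z v)) ys')))))"

definition T_as_irr :: "fm set" where
  "T_as_irr = {ax_irr, ax_trans, ax_depth_ge3, ax_depth_le3}
     \<union> {axA j k l | j k l. True}
     \<union> {axB j k l | j k l. True}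
     \<union> {axC j j' k k' l | j j' k k' l. True}"

end

(*
  Every element of a model lies in exactly one of the definable levels L1, L2, L3. Elements of
  one level are incomparable and every element of L1 lies below every element of L3, so only the
  relation between adjacent levels is undetermined; the extension axioms say that every finite
  pattern of such adjacent relations is realised by a new element of the middle level. Hence a
  finite level-preserving partial isomorphism between two models extends to any further element,
  on either side. Going back and forth along these maps gives an isomorphism of countable models,
  and an Ehrenfeucht-Fraisse induction over formulas shows directly that any two models satisfy
  the same sentences. Axiom (a) keeps producing new minimal elements, so models are infinite; a
  countable model lives on the natural numbers, with a in level (a mod 3) + 1 and the edges
  between adjacent levels read off binary expansions.
*)

theory Submission
  imports Defs "HOL-Library.More_List" "HOL-Library.Nat_Bijection"
begin

lemma sat_Ands [simp]: "sat D R e (Ands ps) \<longleftrightarrow> (\<forall>p\<in>set ps. sat D R e p)"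
  by (induction ps) (auto simp: Ands_def)

lemma sat_distinctF [simp]: "sat D R e (distinctF vs) \<longleftrightarrow> distinct (map e vs)"
  unfolding distinctF_def sat_Ands distinct_conv_nth
  by auto (metis atLeastLessThan_iff Int_iff mem_Collect_eq linorder_neqE_nat zero_le)

lemma sat_Alls:
  "sat D R e (Alls vs p) \<longleftrightarrow>
    (\<forall>e'. (\<forall>v. v \<notin> set vs \<longrightarrow> e' v = e v) \<and> e' ` set vs \<subseteq> D \<longrightarrow> sat D R e' p)"
proof (induction vs arbitrary: e)
  case Nil
  have "(\<forall>v. e' v = e v) \<longleftrightarrow> e' = e" for e' :: "nat \<Rightarrow> 'a" by auto
  then show ?case by (simp add: Alls_def)
next
  case (Cons v vs)
  show ?case
  proof
    assume "sat D R e (Alls (v # vs) p)"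
    then have h: "sat D R (e(v := a)) (Alls vs p)" if "a \<in> D" for a
      using that by (simp add: Alls_def All_def)
    show "\<forall>e'. (\<forall>w. w \<notin> set (v # vs) \<longrightarrow> e' w = e w) \<and> e' ` set (v # vs) \<subseteq> D \<longrightarrow> sat D R e' p"
    proof (intro allI impI)
      fix e' assume e': "(\<forall>w. w \<notin> set (v # vs) \<longrightarrow> e' w = e w) \<and> e' ` set (v # vs) \<subseteq> D"
      have "e' v \<in> D" "\<forall>w. w \<notin> set vs \<longrightarrow> e' w = (e(v := e' v)) w" "e' ` set vs \<subseteq> D"
        using e' by auto
      then show "sat D R e' p" using h Cons.IH by blast
    qed
  next
    assume h: "\<forall>e'. (\<forall>w. w \<notin> set (v # vs) \<longrightarrow> e' w = e w) \<and> e' ` set (v # vs) \<subseteq> D \<longrightarrow> sat D R e' p"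
    have "sat D R (e(v := a)) (Alls vs p)" if "a \<in> D" for a
      unfolding Cons.IH
    proof (intro allI impI)
      fix e' assume e': "(\<forall>w. w \<notin> set vs \<longrightarrow> e' w = (e(v := a)) w) \<and> e' ` set vs \<subseteq> D"
      then have "\<forall>w. w \<notin> set (v # vs) \<longrightarrow> e' w = e w" by auto
      moreover have "e' ` set (v # vs) \<subseteq> D" using e' \<open>a \<in> D\<close> by (cases "v \<in> set vs") auto
      ultimately show "sat D R e' p" using h by blast
    qed
    then show "sat D R e (Alls (v # vs) p)" by (simp add: Alls_def All_def)
  qed
qed

lemma holds_Alls: "holds D R (Alls vs p) \<longleftrightarrow> holds D R p"
proof
  assume "holds D R (Alls vs p)"
  then show "holds D R p" unfolding holds_def sat_Alls by blast
next
  assume h: "holds D R p"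
  show "holds D R (Alls vs p)"
    unfolding holds_def sat_Alls
  proof (intro allI impI)
    fix e e' :: "nat \<Rightarrow> 'a"
    assume "range e \<subseteq> D" and "(\<forall>v. v \<notin> set vs \<longrightarrow> e' v = e v) \<and> e' ` set vs \<subseteq> D"
    then have "range e' \<subseteq> D" by (metis image_subset_iff)
    then show "sat D R e' p" using h unfolding holds_def by blast
  qed
qed

lemma holds_if_sat_independent:
  assumes "D \<noteq> {}" and "\<And>e. sat D R e p \<longleftrightarrow> P"
  shows "holds D R p \<longleftrightarrow> P"
proof -
  obtain d where "d \<in> D" using assms(1) by blast
  then have "range (\<lambda>_. d) \<subseteq> D" by auto
  then show ?thesis unfolding holds_def using assms(2) by blast
qed

section \<open>The levels\<close>

definition immediate_pred :: "'a set \<Rightarrow> ('a \<Rightarrow> 'a \<Rightarrow> bool) \<Rightarrow> 'a \<Rightarrow> 'a \<Rightarrow> bool" where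
  "immediate_pred D R b a \<longleftrightarrow> R b a \<and> \<not> (\<exists>c\<in>D. R b c \<and> R c a)"

fun level :: "'a set \<Rightarrow> ('a \<Rightarrow> 'a \<Rightarrow> bool) \<Rightarrow> nat \<Rightarrow> 'a set" where
  "level D R 0 = {}"
| "level D R (Suc 0) = {a \<in> D. \<forall>b\<in>D. \<not> R b a}"
| "level D R (Suc (Suc n)) = {a \<in> D. \<exists>b\<in>level D R (Suc n). immediate_pred D R b a}"

lemma level_subset: "level D R n \<subseteq> D"
  by (induction D R n rule: level.induct) auto

lemma level_memD: "a \<in> level D R n \<Longrightarrow> a \<in> D"
  using level_subset[of D R n] by blast

lemma level_pred:
  assumes "a \<in> level D R n" and "2 \<le> n"
  shows "\<exists>b\<in>level D R (n - 1). R b a"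
proof -
  obtain m where "n = Suc (Suc m)" using assms(2) by (metis add_2_eq_Suc le_Suc_ex)
  then show ?thesis using assms(1) by (auto simp: immediate_pred_def)
qed

lemma sat_level_formulas:
  assumes "range e \<subseteq> D" and "x < b"
  shows "sat D R e (L1f x b) \<longleftrightarrow> e x \<in> level D R 1"
    and "sat D R e (L2f x b) \<longleftrightarrow> e x \<in> level D R 2"
    and "sat D R e (L3f x b) \<longleftrightarrow> e x \<in> level D R 3"
  using assms
  by (auto simp: L1f_def L2f_def L3f_def covers_def immediate_pred_def numeral_2_eq_2
      numeral_3_eq_3 image_subset_iff)

lemma level_eq_rank:
  fixes rk :: "'a \<Rightarrow> nat"
  assumes rank_less: "\<And>a b. a \<in> D \<Longrightarrow> b \<in> D \<Longrightarrow> R a b \<Longrightarrow> rk a < rk b"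
    and rank_pred: "\<And>a. a \<in> D \<Longrightarrow> 0 < rk a \<Longrightarrow> \<exists>b\<in>D. R b a \<and> Suc (rk b) = rk a"
    and rank_gap: "\<And>a b. a \<in> D \<Longrightarrow> b \<in> D \<Longrightarrow> R a b \<Longrightarrow> Suc (rk a) < rk b \<Longrightarrow> \<exists>c\<in>D. R a c \<and> R c b"
  shows "level D R (Suc n) = {a \<in> D. rk a = n}"
proof (induction n)
  case 0
  have "(\<forall>b\<in>D. \<not> R b a) \<longleftrightarrow> rk a = 0" if a: "a \<in> D" for a
  proof
    assume min: "\<forall>b\<in>D. \<not> R b a"
    show "rk a = 0"
    proof (rule ccontr)
      assume "rk a \<noteq> 0"
      then obtain b where "b \<in> D" "R b a" using rank_pred[OF a] by auto
      then show False using min by blast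
    qed
  next
    assume "rk a = 0"
    then show "\<forall>b\<in>D. \<not> R b a" using rank_less[of _ a] a by auto
  qed
  then show ?case by auto
next
  case (Suc n)
  have eq: "a \<in> level D R (Suc (Suc n)) \<longleftrightarrow> rk a = Suc n" if a: "a \<in> D" for a
  proof
    assume "a \<in> level D R (Suc (Suc n))"
    then obtain b where b: "b \<in> D" "rk b = n" "immediate_pred D R b a"
      using Suc.IH by auto
    then have "n < rk a" using rank_less[OF b(1) a] unfolding immediate_pred_def by auto
    moreover have "\<not> Suc n < rk a"
      using rank_gap[OF b(1) a] b unfolding immediate_pred_def by auto
    ultimately show "rk a = Suc n" by simp
  next
    assume "rk a = Suc n"
    then obtain b where b: "b \<in> D" "R b a" "rk b = n" using rank_pred[OF a] by auto
    have "\<not> (R b c \<and> R c a)" if "c \<in> D" for c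
      using rank_less[OF b(1) that] rank_less[OF that a] b(3) \<open>rk a = Suc n\<close> by auto
    then have "immediate_pred D R b a" unfolding immediate_pred_def using b(2) by blast
    then show "a \<in> level D R (Suc (Suc n))" using Suc.IH a b by auto
  qed
  show ?case
  proof (rule set_eqI)
    fix a
    show "a \<in> level D R (Suc (Suc n)) \<longleftrightarrow> a \<in> {a \<in> D. rk a = Suc n}"
      using eq[of a] level_subset[of D R "Suc (Suc n)"] by (auto simp del: level.simps)
  qed
qed

section \<open>The extension axioms\<close>

definition realized ::
    "'a set \<Rightarrow> ('a \<Rightarrow> 'a \<Rightarrow> bool) \<Rightarrow> nat \<Rightarrow> 'a set \<Rightarrow> 'a set \<Rightarrow> 'a set \<Rightarrow> 'a set \<Rightarrow> 'a set \<Rightarrow> bool" where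
  "realized D R n X Y X' Y' Z \<longleftrightarrow> (\<exists>c\<in>level D R n - Z.
     (\<forall>x\<in>X. R x c) \<and> (\<forall>y\<in>Y. \<not> R y c) \<and> (\<forall>x\<in>X'. R c x) \<and> (\<forall>y\<in>Y'. \<not> R c y))"

text \<open>Axioms (a), (c), (b) are the instances \<open>n = 1, 2, 3\<close>; since level 0 is empty, and
  so is level 4 in a model, the missing side of (a) and (b) is vacuous.\<close>

definition extension_property :: "'a set \<Rightarrow> ('a \<Rightarrow> 'a \<Rightarrow> bool) \<Rightarrow> nat \<Rightarrow> bool" where
  "extension_property D R n \<longleftrightarrow> (\<forall>X Y X' Y' Z.
     finite X \<and> finite Y \<and> finite X' \<and> finite Y' \<and> finite Z \<and>
     X \<union> Y \<subseteq> level D R (n - 1) \<and> X' \<union> Y' \<subseteq> level D R (n + 1) \<and> Z \<subseteq> level D R n \<and>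
     X \<inter> Y = {} \<and> X' \<inter> Y' = {} \<longrightarrow> realized D R n X Y X' Y' Z)"

lemma realized_iff: "realized D R n X Y X' Y' Z \<longleftrightarrow> (\<exists>c\<in>D. c \<in> level D R n \<and> c \<notin> Z \<and>
     (\<forall>x\<in>X. R x c) \<and> (\<forall>y\<in>Y. \<not> R y c) \<and> (\<forall>x\<in>X'. R c x) \<and> (\<forall>y\<in>Y'. \<not> R c y))"
  unfolding realized_def using level_subset[of D R n] by blast

lemma sat_axA_body:
  assumes e: "range e \<subseteq> D" and vars: "\<forall>v\<in>set (XS @ YS @ ZS). v < z"
  shows "sat D R e (Imp (Ands (map (\<lambda>v. L2f v (z + 1)) (XS @ YS) @ map (\<lambda>v. L1f v (z + 1)) ZS
              @ [distinctF (XS @ YS), distinctF ZS]))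
           (Ex z (Ands ([L1f z (z + 1)] @ map (\<lambda>v. Neg (Eq z v)) ZS
              @ map (\<lambda>v. Lt z v) XS @ map (\<lambda>v. Neg (Lt z v)) YS))))
   \<longleftrightarrow> (set (map e (XS @ YS)) \<subseteq> level D R 2 \<and> set (map e ZS) \<subseteq> level D R 1
        \<and> distinct (map e (XS @ YS)) \<and> distinct (map e ZS) \<longrightarrow>
      realized D R 1 {} {} (set (map e XS)) (set (map e YS)) (set (map e ZS)))"
    (is "sat D R e (Imp ?hyps (Ex z ?body)) \<longleftrightarrow> (?H \<longrightarrow> ?C)")
proof -
  have below: "v < Suc z" "v \<noteq> z" if "v \<in> set (XS @ YS @ ZS)" for v
    using bspec[OF vars that] by auto
  have z: "c \<in> D \<Longrightarrow> sat D R (e(z := c)) (L1f z (Suc z)) \<longleftrightarrow> c \<in> level D R 1" for c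
    using e by (subst sat_level_formulas) auto
  have "sat D R e ?hyps \<longleftrightarrow> ?H"
    by (simp add: ball_Un sat_level_formulas[OF e] below image_subset_iff conj_comms)
  moreover have "sat D R e (Ex z ?body) \<longleftrightarrow> ?C"
    unfolding realized_iff by (auto simp: z below ball_Un)
  ultimately show ?thesis unfolding Imp_def sat.simps(4,5) by blast
qed

lemma sat_axB_body:
  assumes e: "range e \<subseteq> D" and vars: "\<forall>v\<in>set (XS @ YS @ ZS). v < z"
  shows "sat D R e (Imp (Ands (map (\<lambda>v. L2f v (z + 1)) (XS @ YS) @ map (\<lambda>v. L3f v (z + 1)) ZS
              @ [distinctF (XS @ YS), distinctF ZS]))
           (Ex z (Ands ([L3f z (z + 1)] @ map (\<lambda>v. Neg (Eq z v)) ZS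
              @ map (\<lambda>v. Lt v z) XS @ map (\<lambda>v. Neg (Lt v z)) YS))))
   \<longleftrightarrow> (set (map e (XS @ YS)) \<subseteq> level D R 2 \<and> set (map e ZS) \<subseteq> level D R 3
        \<and> distinct (map e (XS @ YS)) \<and> distinct (map e ZS) \<longrightarrow>
      realized D R 3 (set (map e XS)) (set (map e YS)) {} {} (set (map e ZS)))"
    (is "sat D R e (Imp ?hyps (Ex z ?body)) \<longleftrightarrow> (?H \<longrightarrow> ?C)")
proof -
  have below: "v < Suc z" "v \<noteq> z" if "v \<in> set (XS @ YS @ ZS)" for v
    using bspec[OF vars that] by auto
  have z: "c \<in> D \<Longrightarrow> sat D R (e(z := c)) (L3f z (Suc z)) \<longleftrightarrow> c \<in> level D R 3" for c
    using e by (subst sat_level_formulas) auto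
  have "sat D R e ?hyps \<longleftrightarrow> ?H"
    by (simp add: ball_Un sat_level_formulas[OF e] below image_subset_iff conj_comms)
  moreover have "sat D R e (Ex z ?body) \<longleftrightarrow> ?C"
    unfolding realized_iff by (auto simp: z below ball_Un)
  ultimately show ?thesis unfolding Imp_def sat.simps(4,5) by blast
qed

lemma sat_axC_body:
  assumes e: "range e \<subseteq> D" and vars: "\<forall>v\<in>set (XS @ YS @ XS' @ YS' @ ZS). v < z"
  shows "sat D R e (Imp (Ands (map (\<lambda>v. L1f v (z + 1)) (XS @ YS) @ map (\<lambda>v. L3f v (z + 1)) (XS' @ YS')
              @ map (\<lambda>v. L2f v (z + 1)) ZS
              @ [distinctF (XS @ YS), distinctF (XS' @ YS'), distinctF ZS]))
           (Ex z (Ands ([L2f z (z + 1)] @ map (\<lambda>v. Neg (Eq z v)) ZS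
              @ map (\<lambda>v. Lt v z) XS @ map (\<lambda>v. Neg (Lt v z)) YS
              @ map (\<lambda>v. Lt z v) XS' @ map (\<lambda>v. Neg (Lt z v)) YS'))))
   \<longleftrightarrow> (set (map e (XS @ YS)) \<subseteq> level D R 1 \<and> set (map e (XS' @ YS')) \<subseteq> level D R 3
        \<and> set (map e ZS) \<subseteq> level D R 2
        \<and> distinct (map e (XS @ YS)) \<and> distinct (map e (XS' @ YS')) \<and> distinct (map e ZS) \<longrightarrow>
      realized D R 2 (set (map e XS)) (set (map e YS)) (set (map e XS')) (set (map e YS'))
        (set (map e ZS)))"
    (is "sat D R e (Imp ?hyps (Ex z ?body)) \<longleftrightarrow> (?H \<longrightarrow> ?C)")
proof -
  have below: "v < Suc z" "v \<noteq> z" if "v \<in> set (XS @ YS @ XS' @ YS' @ ZS)" for v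
    using bspec[OF vars that] by auto
  have z: "c \<in> D \<Longrightarrow> sat D R (e(z := c)) (L2f z (Suc z)) \<longleftrightarrow> c \<in> level D R 2" for c
    using e by (subst sat_level_formulas) auto
  have "sat D R e ?hyps \<longleftrightarrow> ?H"
    by (simp add: ball_Un sat_level_formulas[OF e] below image_subset_iff conj_comms)
  moreover have "sat D R e (Ex z ?body) \<longleftrightarrow> ?C"
    unfolding realized_iff by (auto simp: z below ball_Un)
  ultimately show ?thesis unfolding Imp_def sat.simps(4,5) by blast
qed

lemma holds_axA:
  "holds D R (axA j k l) \<longleftrightarrow> (\<forall>e. range e \<subseteq> D \<longrightarrow>
    (set (map e ([0..<k] @ [k..<k + j])) \<subseteq> level D R 2 \<and> set (map e [k + j..<k + j + l]) \<subseteq> level D R 1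
      \<and> distinct (map e ([0..<k] @ [k..<k + j])) \<and> distinct (map e [k + j..<k + j + l]) \<longrightarrow>
    realized D R 1 {} {} (set (map e [0..<k])) (set (map e [k..<k + j]))
      (set (map e [k + j..<k + j + l]))))"
  unfolding axA_def Let_def holds_Alls unfolding holds_def
  by (intro all_cong1 imp_cong refl sat_axA_body) auto

lemma map_nth_default_segment:
  "length us = a \<Longrightarrow> map (nth_default d (us @ vs @ ws)) [a..<a + length vs] = vs"
  by (auto intro!: nth_equalityI simp: nth_default_def nth_append)

lemma range_nth_default: "set xs \<subseteq> D \<Longrightarrow> d \<in> D \<Longrightarrow> range (nth_default d xs) \<subseteq> D"
  using nth_mem by (fastforce simp: nth_default_def)

lemma holds_axA_iff:
  assumes "D \<noteq> {}"
  shows "(\<forall>j k l. holds D R (axA j k l)) \<longleftrightarrow> extension_property D R 1"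
proof
  assume ax: "\<forall>j k l. holds D R (axA j k l)"
  show "extension_property D R 1"
    unfolding extension_property_def
  proof (intro allI impI)
    fix X Y X' Y' Z :: "'a set"
    assume h: "finite X \<and> finite Y \<and> finite X' \<and> finite Y' \<and> finite Z \<and>
      X \<union> Y \<subseteq> level D R (1 - 1) \<and> X' \<union> Y' \<subseteq> level D R (1 + 1) \<and> Z \<subseteq> level D R 1 \<and>
      X \<inter> Y = {} \<and> X' \<inter> Y' = {}"
    obtain xs ys zs where lists: "set xs = X'" "distinct xs" "set ys = Y'" "distinct ys"
      "set zs = Z" "distinct zs"
      using h finite_distinct_list by metis
    obtain d where "d \<in> D" using assms by blast
    define e where "e = nth_default d (xs @ ys @ zs)"
    have "set (xs @ ys @ zs) \<subseteq> D"
      using h lists level_subset[of D R "1 + 1"] level_subset[of D R 1] by auto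
    then have "range e \<subseteq> D" using \<open>d \<in> D\<close> unfolding e_def by (rule range_nth_default)
    have segs: "map e [0..<length xs] = xs"
      "map e [length xs..<length xs + length ys] = ys"
      "map e [length xs + length ys..<length xs + length ys + length zs] = zs"
      using map_nth_default_segment[of "[]" 0 d xs "ys @ zs"]
        map_nth_default_segment[of xs "length xs" d ys zs]
        map_nth_default_segment[of "xs @ ys" "length xs + length ys" d zs "[]"]
      by (simp_all add: e_def)
    have "holds D R (axA (length ys) (length xs) (length zs))" using ax by blast
    from this[unfolded holds_axA, rule_format, OF \<open>range e \<subseteq> D\<close>, unfolded map_append segs]
    show "realized D R 1 X Y X' Y' Z" using h lists
      by (auto simp del: level.simps(2,3) simp add: eval_nat_numeral)
  qed
next
  assume ext: "extension_property D R 1"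
  show "\<forall>j k l. holds D R (axA j k l)"
    unfolding holds_axA
    using ext[unfolded extension_property_def, rule_format, of "{}" "{}"]
    by (auto simp del: level.simps(2,3) simp add: eval_nat_numeral)
qed

lemma holds_axB:
  "holds D R (axB j k l) \<longleftrightarrow> (\<forall>e. range e \<subseteq> D \<longrightarrow>
    (set (map e ([0..<k] @ [k..<k + j])) \<subseteq> level D R 2 \<and> set (map e [k + j..<k + j + l]) \<subseteq> level D R 3
      \<and> distinct (map e ([0..<k] @ [k..<k + j])) \<and> distinct (map e [k + j..<k + j + l]) \<longrightarrow>
    realized D R 3 (set (map e [0..<k])) (set (map e [k..<k + j])) {} {}
      (set (map e [k + j..<k + j + l]))))"
  unfolding axB_def Let_def holds_Alls unfolding holds_def
  by (intro all_cong1 imp_cong refl sat_axB_body) auto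

lemma holds_axB_iff:
  assumes "D \<noteq> {}" and "level D R 4 = {}"
  shows "(\<forall>j k l. holds D R (axB j k l)) \<longleftrightarrow> extension_property D R 3"
proof
  assume ax: "\<forall>j k l. holds D R (axB j k l)"
  show "extension_property D R 3"
    unfolding extension_property_def
  proof (intro allI impI)
    fix X Y X' Y' Z :: "'a set"
    assume h: "finite X \<and> finite Y \<and> finite X' \<and> finite Y' \<and> finite Z \<and>
      X \<union> Y \<subseteq> level D R (3 - 1) \<and> X' \<union> Y' \<subseteq> level D R (3 + 1) \<and> Z \<subseteq> level D R 3 \<and>
      X \<inter> Y = {} \<and> X' \<inter> Y' = {}"
    obtain xs ys zs where lists: "set xs = X" "distinct xs" "set ys = Y" "distinct ys"
      "set zs = Z" "distinct zs"
      using h finite_distinct_list by metis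
    obtain d where "d \<in> D" using assms by blast
    define e where "e = nth_default d (xs @ ys @ zs)"
    have "set (xs @ ys @ zs) \<subseteq> D"
      using h lists level_subset[of D R "3 - 1"] level_subset[of D R 3] by auto
    then have "range e \<subseteq> D" using \<open>d \<in> D\<close> unfolding e_def by (rule range_nth_default)
    have segs: "map e [0..<length xs] = xs"
      "map e [length xs..<length xs + length ys] = ys"
      "map e [length xs + length ys..<length xs + length ys + length zs] = zs"
      using map_nth_default_segment[of "[]" 0 d xs "ys @ zs"]
        map_nth_default_segment[of xs "length xs" d ys zs]
        map_nth_default_segment[of "xs @ ys" "length xs + length ys" d zs "[]"]
      by (simp_all add: e_def)
    have "holds D R (axB (length ys) (length xs) (length zs))" using ax by blast
    from this[unfolded holds_axB, rule_format, OF \<open>range e \<subseteq> D\<close>, unfolded map_append segs]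
    show "realized D R 3 X Y X' Y' Z" using h lists assms(2)
      by (auto simp del: level.simps(2,3) simp add: eval_nat_numeral)
  qed
next
  assume ext: "extension_property D R 3"
  show "\<forall>j k l. holds D R (axB j k l)"
    unfolding holds_axB
    using ext[unfolded extension_property_def, rule_format, of _ _ "{}" "{}"]
    by (auto simp del: level.simps(2,3) simp add: eval_nat_numeral)
qed

lemma holds_axC:
  "holds D R (axC j j' k k' l) \<longleftrightarrow> (\<forall>e. range e \<subseteq> D \<longrightarrow>
    (set (map e ([0..<k] @ [k..<k + j])) \<subseteq> level D R 1
      \<and> set (map e ([k + j..<k + j + k'] @ [k + j + k'..<k + j + k' + j'])) \<subseteq> level D R 3
      \<and> set (map e [k + j + k' + j'..<k + j + k' + j' + l]) \<subseteq> level D R 2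
      \<and> distinct (map e ([0..<k] @ [k..<k + j]))
      \<and> distinct (map e ([k + j..<k + j + k'] @ [k + j + k'..<k + j + k' + j']))
      \<and> distinct (map e [k + j + k' + j'..<k + j + k' + j' + l]) \<longrightarrow>
    realized D R 2 (set (map e [0..<k])) (set (map e [k..<k + j]))
      (set (map e [k + j..<k + j + k'])) (set (map e [k + j + k'..<k + j + k' + j']))
      (set (map e [k + j + k' + j'..<k + j + k' + j' + l]))))"
  unfolding axC_def Let_def holds_Alls unfolding holds_def
  by (intro all_cong1 imp_cong refl sat_axC_body) auto

lemma holds_axC_iff:
  assumes "D \<noteq> {}"
  shows "(\<forall>j j' k k' l. holds D R (axC j j' k k' l)) \<longleftrightarrow> extension_property D R 2"
proof
  assume ax: "\<forall>j j' k k' l. holds D R (axC j j' k k' l)"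
  show "extension_property D R 2"
    unfolding extension_property_def
  proof (intro allI impI)
    fix X Y X' Y' Z :: "'a set"
    assume h: "finite X \<and> finite Y \<and> finite X' \<and> finite Y' \<and> finite Z \<and>
      X \<union> Y \<subseteq> level D R (2 - 1) \<and> X' \<union> Y' \<subseteq> level D R (2 + 1) \<and> Z \<subseteq> level D R 2 \<and>
      X \<inter> Y = {} \<and> X' \<inter> Y' = {}"
    obtain xs ys xs' ys' zs where lists: "set xs = X" "distinct xs" "set ys = Y" "distinct ys"
      "set xs' = X'" "distinct xs'" "set ys' = Y'" "distinct ys'" "set zs = Z" "distinct zs"
      using h finite_distinct_list by metis
    obtain d where "d \<in> D" using assms by blast
    define e where "e = nth_default d (xs @ ys @ xs' @ ys' @ zs)"
    have "set (xs @ ys @ xs' @ ys' @ zs) \<subseteq> D"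
      using h lists level_subset[of D R "2 - 1"] level_subset[of D R "2 + 1"] level_subset[of D R 2]
      by auto
    then have "range e \<subseteq> D" using \<open>d \<in> D\<close> unfolding e_def by (rule range_nth_default)
    have segs: "map e [0..<length xs] = xs"
      "map e [length xs..<length xs + length ys] = ys"
      "map e [length xs + length ys..<length xs + length ys + length xs'] = xs'"
      "map e [length xs + length ys + length xs'..<length xs + length ys + length xs' + length ys'] = ys'"
      "map e [length xs + length ys + length xs' + length ys'..<
        length xs + length ys + length xs' + length ys' + length zs] = zs"
      using map_nth_default_segment[of "[]" 0 d xs "ys @ xs' @ ys' @ zs"]
        map_nth_default_segment[of xs "length xs" d ys "xs' @ ys' @ zs"]
        map_nth_default_segment[of "xs @ ys" "length xs + length ys" d xs' "ys' @ zs"]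
        map_nth_default_segment[of "xs @ ys @ xs'" "length xs + length ys + length xs'" d ys' zs]
        map_nth_default_segment[of "xs @ ys @ xs' @ ys'"
          "length xs + length ys + length xs' + length ys'" d zs "[]"]
      by (simp_all add: e_def)
    have "holds D R (axC (length ys) (length ys') (length xs) (length xs') (length zs))"
      using ax by blast
    from this[unfolded holds_axC, rule_format, OF \<open>range e \<subseteq> D\<close>, unfolded map_append segs]
    show "realized D R 2 X Y X' Y' Z" using h lists
      by (auto simp del: level.simps(2,3) simp add: eval_nat_numeral)
  qed
next
  assume ext: "extension_property D R 2"
  show "\<forall>j j' k k' l. holds D R (axC j j' k k' l)"
    unfolding holds_axC
    using ext[unfolded extension_property_def, rule_format]
    by (auto simp del: level.simps(2,3) simp add: eval_nat_numeral)
qed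

section \<open>Structure of the models\<close>

locale as_irr_model =
  fixes D :: "'a set" and R :: "'a \<Rightarrow> 'a \<Rightarrow> bool"
  assumes nonempty: "D \<noteq> {}"
    and irreflexive: "a \<in> D \<Longrightarrow> \<not> R a a"
    and transitive: "a \<in> D \<Longrightarrow> b \<in> D \<Longrightarrow> c \<in> D \<Longrightarrow> R a b \<Longrightarrow> R b c \<Longrightarrow> R a c"
    and chain3: "\<exists>a\<in>D. \<exists>b\<in>D. \<exists>c\<in>D. R a b \<and> R b c"
    and no_chain4: "a \<in> D \<Longrightarrow> b \<in> D \<Longrightarrow> c \<in> D \<Longrightarrow> d \<in> D \<Longrightarrow> R a b \<Longrightarrow> R b c \<Longrightarrow> R c d \<Longrightarrow> False"
    and extension: "n \<in> {1, 2, 3} \<Longrightarrow> extension_property D R n"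

lemma level_four_empty:
  assumes "\<And>a b c d. a \<in> D \<Longrightarrow> b \<in> D \<Longrightarrow> c \<in> D \<Longrightarrow> d \<in> D \<Longrightarrow> R a b \<Longrightarrow> R b c \<Longrightarrow> R c d \<Longrightarrow> False"
  shows "level D R 4 = {}"
proof -
  have False if a: "a \<in> level D R 4" for a
  proof -
    obtain b where b: "b \<in> level D R 3" "R b a" using level_pred[OF a] by auto
    obtain c where c: "c \<in> level D R 2" "R c b" using level_pred[OF b(1)] by auto
    obtain d where d: "d \<in> level D R 1" "R d c" using level_pred[OF c(1)] by auto
    show False
      using assms[OF level_memD[OF d(1)] level_memD[OF c(1)] level_memD[OF b(1)] level_memD[OF a]]
        b c d by blast
  qed
  then show ?thesis by blast
qed

context as_irr_model
begin

lemma level_index: "a \<in> level D R n \<Longrightarrow> n \<in> {1, 2, 3}"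
proof -
  have empty: "level D R n = {}" if "3 < n" for n
    using that
  proof (induction n)
    case (Suc n)
    show ?case
    proof (cases "n = 3")
      case True
      then show ?thesis using level_four_empty[OF no_chain4] by simp
    next
      case False
      then obtain m where "n = Suc m" using Suc.prems by (cases n) auto
      then show ?thesis using Suc False by simp
    qed
  qed simp
  assume a: "a \<in> level D R n"
  then have "n \<noteq> 0" by (cases n) auto
  moreover have "n \<le> 3" using a empty[of n] by (cases "3 < n") auto
  ultimately have "n = 1 \<or> n = 2 \<or> n = 3" by presburger
  then show "n \<in> {1, 2, 3}" by simp
qed

lemma level_two_has_successor:
  assumes "a \<in> level D R 2"
  shows "\<exists>c\<in>level D R 3. R a c"
proof -
  have "realized D R 3 {a} {} {} {} {}"
    using extension[of 3] assms unfolding extension_property_def by simp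
  then show ?thesis unfolding realized_def by auto
qed

lemma level_three_maximal:
  assumes a: "a \<in> level D R 3" and "b \<in> D"
  shows "\<not> R a b"
proof
  assume "R a b"
  obtain c where c: "c \<in> level D R 2" "R c a" using level_pred[OF a] by auto
  obtain d where d: "d \<in> level D R 1" "R d c" using level_pred[OF c(1)] by auto
  show False
    using no_chain4[OF level_memD[OF d(1)] level_memD[OF c(1)] level_memD[OF a] \<open>b \<in> D\<close>]
      d(2) c(2) \<open>R a b\<close> by blast
qed

lemma levels_disjoint:
  assumes "a \<in> level D R i" and "a \<in> level D R j"
  shows "i = j"
proof -
  have not_min: "a \<notin> level D R 1" if ak: "a \<in> level D R k" and "2 \<le> k" for k
  proof -
    obtain b where "b \<in> level D R (k - 1)" "R b a" using level_pred[OF ak \<open>2 \<le> k\<close>] by blast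
    then show ?thesis using level_memD[of b] by auto
  qed
  have "a \<notin> level D R 3" if a2: "a \<in> level D R 2"
  proof
    assume a3: "a \<in> level D R 3"
    obtain c where "c \<in> level D R 3" "R a c" using level_two_has_successor[OF a2] by blast
    then show False using level_three_maximal[OF a3 level_memD] by blast
  qed
  moreover have "a \<notin> level D R 1" if "a \<in> level D R 2"
    using not_min[OF that] by simp
  moreover have "a \<notin> level D R 1" if "a \<in> level D R 3"
    using not_min[OF that] by simp
  ultimately show ?thesis
    using level_index[OF assms(1)] level_index[OF assms(2)] assms by (auto simp del: level.simps)
qed

lemma level_exists:
  assumes a: "a \<in> D"
  shows "\<exists>i. a \<in> level D R i"
proof (cases "a \<in> level D R 1")
  case False
  then obtain b where b: "b \<in> D" "R b a" using a by auto
  obtain m where m: "m \<in> level D R 1" "R m a"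
  proof (cases "b \<in> level D R 1")
    case False
    then obtain b' where "b' \<in> D" "R b' b" using b by auto
    moreover have "b' \<in> level D R 1"
      using no_chain4 a b \<open>b' \<in> D\<close> \<open>R b' b\<close> by auto
    ultimately show ?thesis using that transitive a b by blast
  qed (use b that in blast)
  show ?thesis
  proof (cases "immediate_pred D R m a")
    case True
    then have "a \<in> level D R 2" using a m by (auto simp: numeral_2_eq_2)
    then show ?thesis by blast
  next
    case False
    then obtain c where c: "c \<in> D" "R m c" "R c a" using m unfolding immediate_pred_def by blast
    have "m \<in> D" using level_memD[OF m(1)] .
    then have "immediate_pred D R m c" "immediate_pred D R c a"
      using no_chain4 c a m unfolding immediate_pred_def by blast+
    then have "a \<in> level D R 3"
      using a c m by (auto simp: numeral_3_eq_3 numeral_2_eq_2)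
    then show ?thesis by blast
  qed
qed blast

lemma related_levels_less:
  assumes "R a b" and a: "a \<in> level D R i" and b: "b \<in> level D R j"
  shows "i < j"
proof -
  have "a \<in> D" "b \<in> D" using level_memD[OF a] level_memD[OF b] .
  have "j \<noteq> 1" using assms \<open>a \<in> D\<close> levels_disjoint[OF b, of 1] by auto
  moreover have "i \<noteq> 3" using assms \<open>b \<in> D\<close> level_three_maximal by blast
  moreover have "\<not> (i = 2 \<and> j = 2)"
  proof
    assume "i = 2 \<and> j = 2"
    then obtain m where m: "m \<in> level D R 1" "R m a" using level_pred[of a D R 2] a by auto
    have "m \<in> D" using level_memD[OF m(1)] .
    then have "immediate_pred D R a b"
      unfolding immediate_pred_def using no_chain4 m \<open>R a b\<close> \<open>a \<in> D\<close> \<open>b \<in> D\<close> by blast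
    then have "b \<in> level D R 3"
      using \<open>i = 2 \<and> j = 2\<close> a \<open>b \<in> D\<close> by (auto simp: numeral_3_eq_3 numeral_2_eq_2)
    moreover have "b \<in> level D R 2" using b \<open>i = 2 \<and> j = 2\<close> by simp
    ultimately show False using levels_disjoint by fastforce
  qed
  ultimately show ?thesis using level_index[OF a] level_index[OF b] by auto
qed

lemma level_one_below_level_three:
  assumes "a \<in> level D R 1" and "b \<in> level D R 3"
  shows "R a b"
proof -
  have "realized D R 2 {a} {} {b} {} {}"
    using extension[of 2] assms unfolding extension_property_def by simp
  then obtain c where "c \<in> D" "R a c" "R c b"
    unfolding realized_iff by blast
  then show ?thesis using transitive[OF level_memD[OF assms(1)] _ level_memD[OF assms(2)]] by blast
qed

lemma level_relation:
  assumes a: "a \<in> level D R i" and b: "b \<in> level D R j" and "j \<noteq> i + 1"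
  shows "R a b \<longleftrightarrow> j = i + 2"
proof
  assume "R a b"
  then have "i < j" by (rule related_levels_less[OF _ a b])
  then show "j = i + 2" using level_index[OF a] level_index[OF b] \<open>j \<noteq> i + 1\<close> by auto
next
  assume "j = i + 2"
  then have "i = 1" "j = 3" using level_index[OF a] level_index[OF b] by auto
  then show "R a b" using level_one_below_level_three[of a b] a b by simp
qed

lemma infinite_level_one: "infinite (level D R 1)"
proof
  assume "finite (level D R 1)"
  then have "realized D R 1 {} {} {} {} (level D R 1)"
    using extension[of 1] unfolding extension_property_def by simp
  then show False unfolding realized_def by blast
qed

lemma infinite_domain: "infinite D"
  using infinite_super[OF level_subset infinite_level_one] .

end

lemma holds_order_axioms:
  assumes "D \<noteq> {}"
  shows "holds D R ax_irr \<longleftrightarrow> (\<forall>a\<in>D. \<not> R a a)"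
    and "holds D R ax_trans \<longleftrightarrow> (\<forall>a\<in>D. \<forall>b\<in>D. \<forall>c\<in>D. R a b \<and> R b c \<longrightarrow> R a c)"
    and "holds D R ax_depth_ge3 \<longleftrightarrow> (\<exists>a\<in>D. \<exists>b\<in>D. \<exists>c\<in>D. R a b \<and> R b c)"
    and "holds D R ax_depth_le3 \<longleftrightarrow>
      (\<forall>a\<in>D. \<forall>b\<in>D. \<forall>c\<in>D. \<forall>d\<in>D. R a b \<longrightarrow> R b c \<longrightarrow> R c d \<longrightarrow> False)"
proof -
  show "holds D R ax_irr \<longleftrightarrow> (\<forall>a\<in>D. \<not> R a a)"
    by (rule holds_if_sat_independent[OF assms]) (simp add: ax_irr_def All_def)
  show "holds D R ax_trans \<longleftrightarrow> (\<forall>a\<in>D. \<forall>b\<in>D. \<forall>c\<in>D. R a b \<and> R b c \<longrightarrow> R a c)"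
    by (rule holds_if_sat_independent[OF assms]) (auto simp add: ax_trans_def Alls_def All_def Imp_def)
  show "holds D R ax_depth_ge3 \<longleftrightarrow> (\<exists>a\<in>D. \<exists>b\<in>D. \<exists>c\<in>D. R a b \<and> R b c)"
    by (rule holds_if_sat_independent[OF assms]) (auto simp add: ax_depth_ge3_def)
  show "holds D R ax_depth_le3 \<longleftrightarrow>
      (\<forall>a\<in>D. \<forall>b\<in>D. \<forall>c\<in>D. \<forall>d\<in>D. R a b \<longrightarrow> R b c \<longrightarrow> R c d \<longrightarrow> False)"
    by (rule holds_if_sat_independent[OF assms]) (auto simp add: ax_depth_le3_def)
qed

lemma is_model_T_as_irr:
  assumes "D \<noteq> {}"
  shows "is_model D R T_as_irr \<longleftrightarrow> holds D R ax_irr \<and> holds D R ax_trans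
    \<and> holds D R ax_depth_ge3 \<and> holds D R ax_depth_le3 \<and> (\<forall>j k l. holds D R (axA j k l))
    \<and> (\<forall>j k l. holds D R (axB j k l)) \<and> (\<forall>j j' k k' l. holds D R (axC j j' k k' l))"
proof -
  have ball_instances:
    "(\<forall>p\<in>{f j k l |j k l. True}. P p) \<longleftrightarrow> (\<forall>j k l. P (f j k l))"
    "(\<forall>p\<in>{g j j' k k' l |j j' k k' l. True}. P p) \<longleftrightarrow> (\<forall>j j' k k' l. P (g j j' k k' l))"
    for f :: "nat \<Rightarrow> nat \<Rightarrow> nat \<Rightarrow> fm" and g :: "nat \<Rightarrow> nat \<Rightarrow> nat \<Rightarrow> nat \<Rightarrow> nat \<Rightarrow> fm" and P
    by blast+
  show ?thesis
    unfolding is_model_def T_as_irr_def ball_Un ball_instances using assms by simp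
qed

lemma is_model_iff: "is_model D R T_as_irr \<longleftrightarrow> as_irr_model D R"
proof (cases "D = {}")
  case True
  then show ?thesis by (simp add: is_model_def as_irr_model_def)
next
  case False
  note holds_order = holds_order_axioms[OF False]
  show ?thesis
  proof
    assume "is_model D R T_as_irr"
    then have all: "holds D R ax_irr \<and> holds D R ax_trans \<and> holds D R ax_depth_ge3
      \<and> holds D R ax_depth_le3 \<and> (\<forall>j k l. holds D R (axA j k l)) \<and> (\<forall>j k l. holds D R (axB j k l))
      \<and> (\<forall>j j' k k' l. holds D R (axC j j' k k' l))"
      by (rule is_model_T_as_irr[OF False, THEN iffD1])
    have irr: "\<forall>a\<in>D. \<not> R a a"
      and tr: "\<forall>a\<in>D. \<forall>b\<in>D. \<forall>c\<in>D. R a b \<and> R b c \<longrightarrow> R a c"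
      and ge3: "\<exists>a\<in>D. \<exists>b\<in>D. \<exists>c\<in>D. R a b \<and> R b c"
      and le3: "\<forall>a\<in>D. \<forall>b\<in>D. \<forall>c\<in>D. \<forall>d\<in>D. R a b \<longrightarrow> R b c \<longrightarrow> R c d \<longrightarrow> False"
      and A: "\<forall>j k l. holds D R (axA j k l)" and B: "\<forall>j k l. holds D R (axB j k l)"
      and C: "\<forall>j j' k k' l. holds D R (axC j j' k k' l)"
      using all[unfolded holds_order] by blast+
    have "level D R 4 = {}" by (rule level_four_empty) (use le3 in blast)
    then have ext: "extension_property D R 1" "extension_property D R 2" "extension_property D R 3"
      using A C B
      by (simp_all only: holds_axA_iff[OF False] holds_axC_iff[OF False] holds_axB_iff[OF False])
    show "as_irr_model D R"
    proof (rule as_irr_model.intro)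
      show "D \<noteq> {}" by (rule False)
      show "\<not> R a a" if "a \<in> D" for a using irr that by blast
      show "R a c" if "a \<in> D" "b \<in> D" "c \<in> D" "R a b" "R b c" for a b c using tr that by blast
      show "\<exists>a\<in>D. \<exists>b\<in>D. \<exists>c\<in>D. R a b \<and> R b c" by (rule ge3)
      show False if "a \<in> D" "b \<in> D" "c \<in> D" "d \<in> D" "R a b" "R b c" "R c d" for a b c d
        using le3 that by blast
      show "extension_property D R n" if "n \<in> {1, 2, 3}" for n using that ext by auto
    qed
  next
    assume "as_irr_model D R"
    then interpret as_irr_model D R .
    have "level D R 4 = {}" using level_four_empty no_chain4 by blast
    show "is_model D R T_as_irr"
      unfolding is_model_T_as_irr[OF False]
    proof (intro conjI)
      show "holds D R ax_irr" using irreflexive holds_order(1) by blast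
      show "holds D R ax_trans" using transitive holds_order(2) by blast
      show "holds D R ax_depth_ge3" using chain3 holds_order(3) by blast
      show "holds D R ax_depth_le3" using no_chain4 holds_order(4) by blast
      show "\<forall>j k l. holds D R (axA j k l)"
        unfolding holds_axA_iff[OF False] by (rule extension) simp
      show "\<forall>j k l. holds D R (axB j k l)"
        unfolding holds_axB_iff[OF False \<open>level D R 4 = {}\<close>] by (rule extension) simp
      show "\<forall>j j' k k' l. holds D R (axC j j' k k' l)"
        unfolding holds_axC_iff[OF False] by (rule extension) simp
    qed
  qed
qed

section \<open>Back and forth between two models\<close>

definition partial_iso ::
    "'a set \<Rightarrow> ('a \<Rightarrow> 'a \<Rightarrow> bool) \<Rightarrow> 'b set \<Rightarrow> ('b \<Rightarrow> 'b \<Rightarrow> bool) \<Rightarrow> ('a \<times> 'b) set \<Rightarrow> bool" where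
  "partial_iso D1 R1 D2 R2 P \<longleftrightarrow> finite P
     \<and> (\<forall>a b. (a, b) \<in> P \<longrightarrow> (\<exists>i. a \<in> level D1 R1 i \<and> b \<in> level D2 R2 i))
     \<and> (\<forall>a b a' b'. (a, b) \<in> P \<longrightarrow> (a', b') \<in> P \<longrightarrow> (a = a' \<longleftrightarrow> b = b') \<and> (R1 a a' \<longleftrightarrow> R2 b b'))"

lemma partial_iso_empty: "partial_iso D1 R1 D2 R2 {}"
  by (simp add: partial_iso_def)

lemma partial_iso_subset:
  assumes "partial_iso D1 R1 D2 R2 P" and "Q \<subseteq> P"
  shows "partial_iso D1 R1 D2 R2 Q"
proof -
  have "finite Q" using assms finite_subset unfolding partial_iso_def by blast
  moreover have "\<forall>a b. (a, b) \<in> Q \<longrightarrow> (\<exists>i. a \<in> level D1 R1 i \<and> b \<in> level D2 R2 i)"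
    using assms unfolding partial_iso_def by blast
  moreover have "\<forall>a b a' b'. (a, b) \<in> Q \<longrightarrow> (a', b') \<in> Q \<longrightarrow> (a = a' \<longleftrightarrow> b = b') \<and> (R1 a a' \<longleftrightarrow> R2 b b')"
    using assms unfolding partial_iso_def by blast
  ultimately show ?thesis unfolding partial_iso_def by blast
qed

lemma partial_iso_converse: "partial_iso D1 R1 D2 R2 P \<Longrightarrow> partial_iso D2 R2 D1 R1 (P\<inverse>)"
  unfolding partial_iso_def by auto blast

lemma partial_iso_pairs:
  "partial_iso D1 R1 D2 R2 P \<Longrightarrow> (a, b) \<in> P \<Longrightarrow> (a', b') \<in> P \<Longrightarrow>
    (a = a' \<longleftrightarrow> b = b') \<and> (R1 a a' \<longleftrightarrow> R2 b b')"
  unfolding partial_iso_def by blast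

lemma partial_iso_domain: "partial_iso D1 R1 D2 R2 P \<Longrightarrow> (a, b) \<in> P \<Longrightarrow> a \<in> D1 \<and> b \<in> D2"
  unfolding partial_iso_def by (blast dest: level_memD)

lemma partial_iso_insert:
  assumes "partial_iso D1 R1 D2 R2 P" and "a \<in> level D1 R1 i" and "c \<in> level D2 R2 i"
    and "\<not> R1 a a" and "\<not> R2 c c"
    and "\<And>a' b'. (a', b') \<in> P \<Longrightarrow> (a = a' \<longleftrightarrow> c = b') \<and> (R1 a a' \<longleftrightarrow> R2 c b') \<and> (R1 a' a \<longleftrightarrow> R2 b' c)"
  shows "partial_iso D1 R1 D2 R2 (insert (a, c) P)"
  using assms unfolding partial_iso_def by auto

lemma isomorphic_if_bijective_relation:
  assumes dom: "fst ` U = D1" and ran: "snd ` U = D2"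
    and iso: "\<And>a b a' b'. (a, b) \<in> U \<Longrightarrow> (a', b') \<in> U \<Longrightarrow> (a = a' \<longleftrightarrow> b = b') \<and> (R1 a a' \<longleftrightarrow> R2 b b')"
  shows "isomorphic D1 R1 D2 R2"
proof -
  define f where "f a = (SOME b. (a, b) \<in> U)" for a
  have f: "(a, f a) \<in> U" if "a \<in> D1" for a
    using that dom unfolding f_def by (metis (mono_tags, lifting) image_iff prod.collapse someI)
  have "bij_betw f D1 D2"
  proof (rule bij_betw_imageI)
    show "inj_on f D1" using iso f by (metis inj_onI)
    show "f ` D1 = D2"
    proof
      show "f ` D1 \<subseteq> D2" using f ran by force
      show "D2 \<subseteq> f ` D1"
      proof
        fix b assume "b \<in> D2"
        then obtain a where ab: "(a, b) \<in> U" using ran by force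
        then have "a \<in> D1" using dom by force
        then show "b \<in> f ` D1" using iso[OF f ab] by auto
      qed
    qed
  qed
  moreover have "\<forall>x\<in>D1. \<forall>y\<in>D1. R1 x y \<longleftrightarrow> R2 (f x) (f y)" using iso f by blast
  ultimately show ?thesis unfolding isomorphic_def by blast
qed

lemma back_and_forth_chain:
  fixes S :: "('a \<times> 'b) set \<Rightarrow> bool" and f :: "nat \<Rightarrow> 'a" and g :: "nat \<Rightarrow> 'b"
  assumes S_empty: "S {}"
    and extend_dom: "\<And>P n. S P \<Longrightarrow> \<exists>b. S (insert (f n, b) P)"
    and extend_ran: "\<And>P n. S P \<Longrightarrow> \<exists>a. S (insert (a, g n) P)"
  obtains C where "\<And>n. S (C n)" and "\<And>m n. m \<le> n \<Longrightarrow> C m \<subseteq> C n"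
    and "\<And>n. f n \<in> fst ` C (Suc n)" and "\<And>n. g n \<in> snd ` C (Suc n)"
proof -
  have step: "\<exists>Q. S Q \<and> P \<subseteq> Q \<and> f n \<in> fst ` Q \<and> g n \<in> snd ` Q" if SP: "S P" for P n
  proof -
    obtain b where "S (insert (f n, b) P)" using extend_dom[OF SP] by blast
    moreover obtain a where "S (insert (a, g n) (insert (f n, b) P))"
      using extend_ran[OF calculation] by blast
    ultimately show ?thesis by (intro exI[of _ "insert (a, g n) (insert (f n, b) P)"]) force
  qed
  define C where "C = rec_nat {} (\<lambda>n P. SOME Q. S Q \<and> P \<subseteq> Q \<and> f n \<in> fst ` Q \<and> g n \<in> snd ` Q)"
  have C_Suc: "C (Suc n) = (SOME Q. S Q \<and> C n \<subseteq> Q \<and> f n \<in> fst ` Q \<and> g n \<in> snd ` Q)" for n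
    by (simp add: C_def)
  have S_C: "S (C n)" for n
  proof (induction n)
    case 0
    then show ?case by (simp add: C_def S_empty)
  next
    case (Suc n)
    show ?case unfolding C_Suc using someI_ex[OF step[of "C n" n, OF Suc.IH]] by blast
  qed
  have C_step: "C n \<subseteq> C (Suc n) \<and> f n \<in> fst ` C (Suc n) \<and> g n \<in> snd ` C (Suc n)" for n
    unfolding C_Suc using someI_ex[OF step[of "C n" n, OF S_C]] by blast
  have "C m \<subseteq> C n" if "m \<le> n" for m n
    using lift_Suc_mono_le[of C, OF _ that] C_step by blast
  then show thesis using that S_C C_step by blast
qed

lemma back_and_forth_isomorphic:
  fixes S :: "('a \<times> 'b) set \<Rightarrow> bool"
  assumes countable: "countable D1" "countable D2" and nonempty: "D1 \<noteq> {}" "D2 \<noteq> {}"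
    and S_empty: "S {}"
    and extend_dom: "\<And>P a. S P \<Longrightarrow> a \<in> D1 \<Longrightarrow> \<exists>b. S (insert (a, b) P)"
    and extend_ran: "\<And>P b. S P \<Longrightarrow> b \<in> D2 \<Longrightarrow> \<exists>a. S (insert (a, b) P)"
    and iso: "\<And>P a b a' b'. S P \<Longrightarrow> (a, b) \<in> P \<Longrightarrow> (a', b') \<in> P \<Longrightarrow>
      a \<in> D1 \<and> b \<in> D2 \<and> (a = a' \<longleftrightarrow> b = b') \<and> (R1 a a' \<longleftrightarrow> R2 b b')"
  shows "isomorphic D1 R1 D2 R2"
proof -
  let ?a = "from_nat_into D1" and ?b = "from_nat_into D2"
  obtain C where S_C: "\<And>n. S (C n)" and C_mono: "\<And>m n. m \<le> n \<Longrightarrow> C m \<subseteq> C n"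
    and dom: "\<And>n. ?a n \<in> fst ` C (Suc n)" and ran: "\<And>n. ?b n \<in> snd ` C (Suc n)"
    using back_and_forth_chain[of S ?a ?b] S_empty
      extend_dom[OF _ from_nat_into[OF nonempty(1)]] extend_ran[OF _ from_nat_into[OF nonempty(2)]]
    by blast
  define U where "U = (\<Union>n. C n)"
  have U_iso: "a \<in> D1 \<and> b \<in> D2 \<and> (a = a' \<longleftrightarrow> b = b') \<and> (R1 a a' \<longleftrightarrow> R2 b b')"
    if ab: "(a, b) \<in> U" "(a', b') \<in> U" for a b a' b'
  proof -
    obtain m n where "(a, b) \<in> C m" "(a', b') \<in> C n" using ab unfolding U_def by blast
    then have "(a, b) \<in> C (max m n)" "(a', b') \<in> C (max m n)"
      using C_mono[of m "max m n"] C_mono[of n "max m n"] by auto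
    then show ?thesis using iso[OF S_C] by blast
  qed
  have "?a n \<in> fst ` U" "?b n \<in> snd ` U" for n
    using dom[of n] ran[of n] unfolding U_def by force+
  then have "D1 \<subseteq> fst ` U" "D2 \<subseteq> snd ` U"
    using from_nat_into_surj[OF countable(1)] from_nat_into_surj[OF countable(2)] by (metis subsetI)+
  moreover have "fst ` U \<subseteq> D1" "snd ` U \<subseteq> D2"
  proof (rule_tac[!] image_subsetI)
    fix p assume "p \<in> U"
    then show "fst p \<in> D1" "snd p \<in> D2" using U_iso[of "fst p" "snd p" "fst p" "snd p"] by simp_all
  qed
  ultimately have "fst ` U = D1" "snd ` U = D2" by (simp_all add: subset_antisym)
  then show ?thesis by (rule isomorphic_if_bijective_relation) (use U_iso in blast)
qed

locale model_pair = M1: as_irr_model D1 R1 + M2: as_irr_model D2 R2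
  for D1 :: "'a set" and R1 and D2 :: "'b set" and R2
begin

lemma model_pair_swap: "model_pair D2 R2 D1 R1"
  by (simp add: model_pair_def M1.as_irr_model_axioms M2.as_irr_model_axioms)

lemma partial_iso_level:
  assumes "partial_iso D1 R1 D2 R2 P" and "(a, b) \<in> P"
  shows "a \<in> level D1 R1 i \<longleftrightarrow> b \<in> level D2 R2 i"
proof -
  obtain k where "a \<in> level D1 R1 k" "b \<in> level D2 R2 k"
    using assms unfolding partial_iso_def by blast
  then show ?thesis using M1.levels_disjoint M2.levels_disjoint by blast
qed

lemma partial_iso_insert_level:
  assumes P: "partial_iso D1 R1 D2 R2 P" and a: "a \<in> level D1 R1 n" and c: "c \<in> level D2 R2 n"
    and new: "a \<notin> fst ` P" "c \<notin> snd ` P"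
    and below: "\<And>a' b'. (a', b') \<in> P \<Longrightarrow> a' \<in> level D1 R1 (n - 1) \<Longrightarrow> R1 a' a \<longleftrightarrow> R2 b' c"
    and above: "\<And>a' b'. (a', b') \<in> P \<Longrightarrow> a' \<in> level D1 R1 (n + 1) \<Longrightarrow> R1 a a' \<longleftrightarrow> R2 c b'"
  shows "partial_iso D1 R1 D2 R2 (insert (a, c) P)"
proof (rule partial_iso_insert[OF P a c])
  show "\<not> R1 a a" using M1.irreflexive[OF level_memD[OF a]] .
  show "\<not> R2 c c" using M2.irreflexive[OF level_memD[OF c]] .
  fix a' b' assume ab': "(a', b') \<in> P"
  then obtain i where i: "a' \<in> level D1 R1 i" "b' \<in> level D2 R2 i"
    using P unfolding partial_iso_def by blast
  have "a \<noteq> a'" "c \<noteq> b'" using new ab' by force+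
  moreover have "R1 a a' \<longleftrightarrow> R2 c b'"
  proof (cases "i = n + 1")
    case True
    then show ?thesis using above[OF ab'] i(1) by simp
  next
    case False
    then show ?thesis using M1.level_relation[OF a i(1)] M2.level_relation[OF c i(2)] by simp
  qed
  moreover have "R1 a' a \<longleftrightarrow> R2 b' c"
  proof (cases "n = i + 1")
    case True
    then show ?thesis using below[OF ab'] i(1) by simp
  next
    case False
    then show ?thesis using M1.level_relation[OF i(1) a] M2.level_relation[OF i(2) c] by simp
  qed
  ultimately show "(a = a' \<longleftrightarrow> c = b') \<and> (R1 a a' \<longleftrightarrow> R2 c b') \<and> (R1 a' a \<longleftrightarrow> R2 b' c)"
    by blast
qed

lemma forth_step:
  assumes P: "partial_iso D1 R1 D2 R2 P" and a: "a \<in> D1"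
  shows "\<exists>c. partial_iso D1 R1 D2 R2 (insert (a, c) P)"
proof (cases "a \<in> fst ` P")
  case True
  then obtain c where "(a, c) \<in> P" by force
  then show ?thesis using P by (metis insert_absorb)
next
  case new: False
  obtain n where an: "a \<in> level D1 R1 n" using M1.level_exists[OF a] by blast
  define X where "X = {b. \<exists>a'. (a', b) \<in> P \<and> a' \<in> level D1 R1 (n - 1) \<and> R1 a' a}"
  define Y where "Y = {b. \<exists>a'. (a', b) \<in> P \<and> a' \<in> level D1 R1 (n - 1) \<and> \<not> R1 a' a}"
  define X' where "X' = {b. \<exists>a'. (a', b) \<in> P \<and> a' \<in> level D1 R1 (n + 1) \<and> R1 a a'}"
  define Y' where "Y' = {b. \<exists>a'. (a', b) \<in> P \<and> a' \<in> level D1 R1 (n + 1) \<and> \<not> R1 a a'}"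
  define Z where "Z = {b. \<exists>a'. (a', b) \<in> P \<and> a' \<in> level D1 R1 n}"
  have "finite (snd ` P)" using P by (simp add: partial_iso_def)
  moreover have "X \<union> Y \<union> X' \<union> Y' \<union> Z \<subseteq> snd ` P"
    unfolding X_def Y_def X'_def Y'_def Z_def by force
  ultimately have "finite (X \<union> Y \<union> X' \<union> Y' \<union> Z)" by (rule finite_subset[rotated])
  then have "finite X" "finite Y" "finite X'" "finite Y'" "finite Z" by simp_all
  moreover have "X \<union> Y \<subseteq> level D2 R2 (n - 1)" "X' \<union> Y' \<subseteq> level D2 R2 (n + 1)" "Z \<subseteq> level D2 R2 n"
    using partial_iso_level[OF P] unfolding X_def Y_def X'_def Y'_def Z_def by blast+
  moreover have "X \<inter> Y = {}" "X' \<inter> Y' = {}"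
    using partial_iso_pairs[OF P] unfolding X_def Y_def X'_def Y'_def by blast+
  moreover have "extension_property D2 R2 n"
    using M2.extension M1.level_index[OF an] by blast
  ultimately have "realized D2 R2 n X Y X' Y' Z"
    unfolding extension_property_def by blast
  then obtain c where c: "c \<in> level D2 R2 n" "c \<notin> Z"
    and below: "\<forall>x\<in>X. R2 x c" "\<forall>y\<in>Y. \<not> R2 y c"
    and above: "\<forall>x\<in>X'. R2 c x" "\<forall>y\<in>Y'. \<not> R2 c y"
    unfolding realized_def by blast
  have "c \<notin> snd ` P"
  proof
    assume "c \<in> snd ` P"
    then obtain a' where a'c: "(a', c) \<in> P" by force
    then have "a' \<in> level D1 R1 n" using partial_iso_level[OF P a'c] c(1) by blast
    then show False using a'c c(2) unfolding Z_def by blast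
  qed
  have "partial_iso D1 R1 D2 R2 (insert (a, c) P)"
  proof (rule partial_iso_insert_level[OF P an c(1) new \<open>c \<notin> snd ` P\<close>])
    show "R1 a' a \<longleftrightarrow> R2 b' c" if "(a', b') \<in> P" "a' \<in> level D1 R1 (n - 1)" for a' b'
      using that below unfolding X_def Y_def by (cases "R1 a' a") blast+
    show "R1 a a' \<longleftrightarrow> R2 c b'" if "(a', b') \<in> P" "a' \<in> level D1 R1 (n + 1)" for a' b'
      using that above unfolding X'_def Y'_def by (cases "R1 a a'") blast+
  qed
  then show ?thesis ..
qed

lemma back_step:
  assumes "partial_iso D1 R1 D2 R2 P" and "b \<in> D2"
  shows "\<exists>a. partial_iso D1 R1 D2 R2 (insert (a, b) P)"
proof -
  obtain a where "partial_iso D2 R2 D1 R1 (insert (b, a) (P\<inverse>))"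
    using model_pair.forth_step[OF model_pair_swap partial_iso_converse[OF assms(1)] assms(2)] by blast
  then have "partial_iso D1 R1 D2 R2 ((insert (b, a) (P\<inverse>))\<inverse>)" by (rule partial_iso_converse)
  moreover have "(insert (b, a) (P\<inverse>))\<inverse> = insert (a, b) P" by auto
  ultimately show ?thesis by auto
qed

lemma sat_iff_if_partial_iso:
  assumes "fv \<phi> \<subseteq> V" and "partial_iso D1 R1 D2 R2 ((\<lambda>v. (e1 v, e2 v)) ` V)"
  shows "sat D1 R1 e1 \<phi> \<longleftrightarrow> sat D2 R2 e2 \<phi>"
  using assms
proof (induction \<phi> arbitrary: V e1 e2)
  case (Eq x y)
  then have mem: "(e1 x, e2 x) \<in> (\<lambda>v. (e1 v, e2 v)) ` V" "(e1 y, e2 y) \<in> (\<lambda>v. (e1 v, e2 v)) ` V"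
    by auto
  show ?case unfolding sat.simps by (rule partial_iso_pairs[OF Eq.prems(2) mem, THEN conjunct1])
next
  case (Lt x y)
  then have mem: "(e1 x, e2 x) \<in> (\<lambda>v. (e1 v, e2 v)) ` V" "(e1 y, e2 y) \<in> (\<lambda>v. (e1 v, e2 v)) ` V"
    by auto
  show ?case unfolding sat.simps by (rule partial_iso_pairs[OF Lt.prems(2) mem, THEN conjunct2])
next
  case (Ex x p)
  let ?P = "(\<lambda>v. (e1 v, e2 v)) ` (V - {x})"
  have P: "partial_iso D1 R1 D2 R2 ?P"
    by (rule partial_iso_subset[OF Ex.prems(2) image_mono]) blast
  have step: "sat D1 R1 (e1(x := a)) p \<longleftrightarrow> sat D2 R2 (e2(x := c)) p"
    if ac: "partial_iso D1 R1 D2 R2 (insert (a, c) ?P)" for a c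
  proof -
    have "(\<lambda>v. ((e1(x := a)) v, (e2(x := c)) v)) ` insert x (V - {x}) = insert (a, c) ?P" by auto
    then have "partial_iso D1 R1 D2 R2 ((\<lambda>v. ((e1(x := a)) v, (e2(x := c)) v)) ` insert x (V - {x}))"
      using ac by simp
    moreover have "fv p \<subseteq> insert x (V - {x})" using Ex.prems(1) by auto
    ultimately show ?thesis using Ex.IH by blast
  qed
  show ?case
  proof
    assume "sat D1 R1 e1 (Ex x p)"
    then obtain a where a: "a \<in> D1" "sat D1 R1 (e1(x := a)) p" by auto
    obtain c where c: "partial_iso D1 R1 D2 R2 (insert (a, c) ?P)"
      using forth_step[OF P a(1)] by blast
    have "c \<in> D2" using partial_iso_domain[OF c insertI1] by blast
    moreover have "sat D2 R2 (e2(x := c)) p" using step[OF c] a(2) by blast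
    ultimately show "sat D2 R2 e2 (Ex x p)" by auto
  next
    assume "sat D2 R2 e2 (Ex x p)"
    then obtain c where c: "c \<in> D2" "sat D2 R2 (e2(x := c)) p" by auto
    obtain a where a: "partial_iso D1 R1 D2 R2 (insert (a, c) ?P)"
      using back_step[OF P c(1)] by blast
    have "a \<in> D1" using partial_iso_domain[OF a insertI1] by blast
    moreover have "sat D1 R1 (e1(x := a)) p" using step[OF a] c(2) by blast
    ultimately show "sat D1 R1 e1 (Ex x p)" by auto
  qed
qed auto

lemma holds_sentence_iff:
  assumes "sentence \<phi>"
  shows "holds D1 R1 \<phi> \<longleftrightarrow> holds D2 R2 \<phi>"
proof -
  have same: "sat D1 R1 e1 \<phi> \<longleftrightarrow> sat D2 R2 e2 \<phi>" for e1 e2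
    by (rule sat_iff_if_partial_iso[of \<phi> "{}"])
      (use assms in \<open>simp_all add: sentence_def partial_iso_empty\<close>)
  obtain d where "d \<in> D2" using M2.nonempty by blast
  have "holds D1 R1 \<phi> \<longleftrightarrow> sat D2 R2 (\<lambda>_. d) \<phi>"
    using holds_if_sat_independent[OF M1.nonempty] same by blast
  also have "\<dots> \<longleftrightarrow> holds D2 R2 \<phi>"
    using holds_if_sat_independent[OF M2.nonempty] same by blast
  finally show ?thesis .
qed

lemma countable_isomorphic:
  assumes "countable D1" and "countable D2"
  shows "isomorphic D1 R1 D2 R2"
proof (rule back_and_forth_isomorphic[where S = "partial_iso D1 R1 D2 R2"])
  show "\<exists>c. partial_iso D1 R1 D2 R2 (insert (a, c) P)" if "partial_iso D1 R1 D2 R2 P" "a \<in> D1" for P a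
    using forth_step that .
  show "\<exists>a. partial_iso D1 R1 D2 R2 (insert (a, b) P)" if "partial_iso D1 R1 D2 R2 P" "b \<in> D2" for P b
    using back_step that .
  show "a \<in> D1 \<and> b \<in> D2 \<and> (a = a' \<longleftrightarrow> b = b') \<and> (R1 a a' \<longleftrightarrow> R2 b b')"
    if "partial_iso D1 R1 D2 R2 P" "(a, b) \<in> P" "(a', b') \<in> P" for P a b a' b'
    using partial_iso_domain[OF that(1,2)] partial_iso_pairs[OF that] by blast
qed (use assms M1.nonempty M2.nonempty partial_iso_empty in auto)

end

section \<open>A countable model\<close>

text \<open>The larger endpoint of a coded edge lists its neighbours below it in the binary expansion
  of its quotient by 3, so every finite pattern of edges to smaller numbers is realised in each
  residue class.\<close>

definition coded_edge :: "nat \<Rightarrow> nat \<Rightarrow> bool" where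
  "coded_edge x y \<longleftrightarrow> (x < y \<and> x \<in> set_decode (y div 3)) \<or> (y < x \<and> y \<in> set_decode (x div 3))"

definition nat_rel :: "nat \<Rightarrow> nat \<Rightarrow> bool" where
  "nat_rel a b \<longleftrightarrow> (a mod 3 = 0 \<and> b mod 3 = 2) \<or> (b mod 3 = Suc (a mod 3) \<and> coded_edge a b)"

lemma coded_edge_sym: "coded_edge x y \<longleftrightarrow> coded_edge y x"
  by (auto simp: coded_edge_def)

lemma coded_edge_extension:
  assumes "finite F" and "r < 3"
  shows "\<exists>c. c mod 3 = r \<and> (\<forall>x\<in>F. x < c \<and> (coded_edge x c \<longleftrightarrow> x \<in> S))"
proof -
  obtain N where N: "\<forall>x\<in>F. x < N" using assms(1) finite_nat_set_iff_bounded by blast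
  define A where "A = insert N (S \<inter> F)"
  define c where "c = 3 * set_encode A + r"
  have fin: "finite A" using assms(1) by (simp add: A_def)
  have "N \<notin> S \<inter> F" using N by auto
  then have "2 ^ N \<le> set_encode A" using assms(1) by (simp add: A_def)
  then have "N < c" using less_exp[of N] unfolding c_def by linarith
  have c: "c mod 3 = r" "c div 3 = set_encode A" using assms(2) by (simp_all add: c_def)
  have "x < c \<and> (coded_edge x c \<longleftrightarrow> x \<in> S)" if "x \<in> F" for x
  proof -
    have "x < c" using N that \<open>N < c\<close> by force
    moreover have "x \<in> A \<longleftrightarrow> x \<in> S" using that N by (auto simp: A_def)
    ultimately show ?thesis using fin unfolding coded_edge_def c(2) by auto
  qed
  then show ?thesis using c(1) by blast
qed

lemma nat_rel_mod_less: "nat_rel a b \<Longrightarrow> a mod 3 < b mod 3"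
  by (auto simp: nat_rel_def)

lemma nat_rel_adjacent: "b mod 3 = Suc (a mod 3) \<Longrightarrow> nat_rel a b \<longleftrightarrow> coded_edge a b"
  by (auto simp: nat_rel_def)

lemma level_nat_rel: "level UNIV nat_rel n = {a. Suc (a mod 3) = n}"
proof -
  have less: "\<And>a b. a \<in> UNIV \<Longrightarrow> b \<in> UNIV \<Longrightarrow> nat_rel a b \<Longrightarrow> a mod 3 < b mod 3"
    using nat_rel_mod_less by blast
  have pred: "\<exists>b\<in>UNIV. nat_rel b a \<and> Suc (b mod 3) = a mod 3" if "0 < a mod 3" for a :: nat
  proof -
    have "a mod 3 - 1 < 3" using mod_less_divisor[of 3 a] by linarith
    then obtain b where "b mod 3 = a mod 3 - 1" "a < b" "coded_edge a b"
      using coded_edge_extension[of "{a}" "a mod 3 - 1" "{a}"] by auto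
    then have "nat_rel b a \<and> Suc (b mod 3) = a mod 3" using that by (auto simp: nat_rel_def coded_edge_sym)
    then show ?thesis by blast
  qed
  have gap: "\<exists>c\<in>UNIV. nat_rel a c \<and> nat_rel c b" if "Suc (a mod 3) < b mod 3" for a b :: nat
  proof -
    have "b mod 3 < 3" by simp
    then have "a mod 3 = 0" "b mod 3 = 2" using that by linarith+
    obtain c where "c mod 3 = 1" "coded_edge a c" "coded_edge b c"
      using coded_edge_extension[of "{a, b}" 1 "{a, b}"] by auto
    then have "nat_rel a c \<and> nat_rel c b"
      using \<open>a mod 3 = 0\<close> \<open>b mod 3 = 2\<close> by (auto simp: nat_rel_def coded_edge_sym)
    then show ?thesis by blast
  qed
  show ?thesis
  proof (cases n)
    case (Suc m)
    then show ?thesis using level_eq_rank[of UNIV nat_rel "\<lambda>a. a mod 3" m] less pred gap by auto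
  qed simp
qed

lemma extension_property_nat_rel:
  assumes n: "n \<in> {1, 2, 3}"
  shows "extension_property UNIV nat_rel n"
  unfolding extension_property_def
proof (intro allI impI)
  fix X Y X' Y' Z :: "nat set"
  assume h: "finite X \<and> finite Y \<and> finite X' \<and> finite Y' \<and> finite Z \<and>
    X \<union> Y \<subseteq> level UNIV nat_rel (n - 1) \<and> X' \<union> Y' \<subseteq> level UNIV nat_rel (n + 1) \<and>
    Z \<subseteq> level UNIV nat_rel n \<and> X \<inter> Y = {} \<and> X' \<inter> Y' = {}"
  then have mods: "\<forall>x\<in>X \<union> Y. Suc (Suc (x mod 3)) = n" "\<forall>x\<in>X' \<union> Y'. x mod 3 = n"
    "\<forall>z\<in>Z. Suc (z mod 3) = n"
    using n by (auto simp: level_nat_rel)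
  have fin: "finite (X \<union> Y \<union> X' \<union> Y' \<union> Z)" using h by simp
  have "n - 1 < 3" using n by auto
  obtain c where c: "c mod 3 = n - 1"
    and edges: "\<forall>x\<in>X \<union> Y \<union> X' \<union> Y' \<union> Z. x < c \<and> (coded_edge x c \<longleftrightarrow> x \<in> X \<union> X')"
    using coded_edge_extension[OF fin \<open>n - 1 < 3\<close>, of "X \<union> X'"] by blast
  have disj: "x \<notin> X' \<union> Y'" if "x \<in> X \<union> Y" for x
  proof
    assume "x \<in> X' \<union> Y'"
    then have "x mod 3 = n" using mods(2) by blast
    moreover have "Suc (Suc (x mod 3)) = n" using mods(1) that by blast
    ultimately show False by simp
  qed
  have below: "nat_rel x c \<longleftrightarrow> x \<in> X \<union> X'" if "x \<in> X \<union> Y" for x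
  proof -
    have "c mod 3 = Suc (x mod 3)" using mods(1) that c by auto
    then have "nat_rel x c \<longleftrightarrow> coded_edge x c" by (rule nat_rel_adjacent)
    then show ?thesis using edges that by blast
  qed
  have above: "nat_rel c x \<longleftrightarrow> x \<in> X \<union> X'" if "x \<in> X' \<union> Y'" for x
  proof -
    have "x mod 3 = Suc (c mod 3)" using mods(2) that c n by auto
    then have "nat_rel c x \<longleftrightarrow> coded_edge c x" by (rule nat_rel_adjacent)
    then show ?thesis using edges that coded_edge_sym by blast
  qed
  have "Suc (c mod 3) = n" using c n by auto
  moreover have "c \<notin> Z" using edges less_irrefl by blast
  ultimately have "c \<in> level UNIV nat_rel n - Z" by (simp add: level_nat_rel)
  moreover have "\<forall>x\<in>X. nat_rel x c" using below by blast
  moreover have "\<forall>y\<in>Y. \<not> nat_rel y c" using below disj h by blast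
  moreover have "\<forall>x\<in>X'. nat_rel c x" using above by blast
  moreover have "\<forall>y\<in>Y'. \<not> nat_rel c y" using above disj h by blast
  ultimately show "realized UNIV nat_rel n X Y X' Y' Z"
    unfolding realized_def by blast
qed

lemma as_irr_model_nat: "as_irr_model UNIV nat_rel"
proof -
  have irreflexive: "\<not> nat_rel a a" for a
    using nat_rel_mod_less[of a a] by blast
  have transitive: "nat_rel a c" if "nat_rel a b" "nat_rel b c" for a b c
  proof -
    have "a mod 3 < b mod 3" "b mod 3 < c mod 3" "c mod 3 < 3"
      using nat_rel_mod_less that by auto
    then have "a mod 3 = 0" "c mod 3 = 2" by linarith+
    then show ?thesis by (simp add: nat_rel_def)
  qed
  have no_chain4: False if "nat_rel a b" "nat_rel b c" "nat_rel c d" for a b c d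
    using nat_rel_mod_less[OF that(1)] nat_rel_mod_less[OF that(2)] nat_rel_mod_less[OF that(3)]
      mod_less_divisor[of 3 d] by linarith
  obtain c where "c mod 3 = 1" "coded_edge 0 c" "coded_edge 2 c"
    using coded_edge_extension[of "{0, 2}" 1 "{0, 2}"] by auto
  then have chain3: "nat_rel 0 c" "nat_rel c 2" by (auto simp: nat_rel_def coded_edge_sym)
  show ?thesis
    by unfold_locales (use irreflexive transitive no_chain4 chain3 extension_property_nat_rel in blast)+
qed

theorem mainTheorem3:
  shows "(\<exists>(D :: nat set) R. is_model D R T_as_irr \<and> infinite D)
    \<and> (\<forall>(D1 :: 'a set) R1 (D2 :: 'b set) R2.
          is_model D1 R1 T_as_irr \<and> countable D1 \<and> infinite D1 \<and>
          is_model D2 R2 T_as_irr \<and> countable D2 \<and> infinite D2 \<longrightarrow>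
          isomorphic D1 R1 D2 R2)
    \<and> (\<forall>(D :: 'c set) R. is_model D R T_as_irr \<longrightarrow> infinite D)
    \<and> (\<forall>(D1 :: 'd set) R1 (D2 :: 'e set) R2 \<phi>.
          is_model D1 R1 T_as_irr \<and> is_model D2 R2 T_as_irr \<and> sentence \<phi> \<longrightarrow>
          (holds D1 R1 \<phi> \<longleftrightarrow> holds D2 R2 \<phi>))"
proof (intro conjI allI impI)
  show "\<exists>(D :: nat set) R. is_model D R T_as_irr \<and> infinite D"
    using as_irr_model_nat is_model_iff infinite_UNIV_nat by blast
next
  fix D1 :: "'a set" and R1 and D2 :: "'b set" and R2
  assume "is_model D1 R1 T_as_irr \<and> countable D1 \<and> infinite D1 \<and>
    is_model D2 R2 T_as_irr \<and> countable D2 \<and> infinite D2"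
  then show "isomorphic D1 R1 D2 R2"
    using model_pair.countable_isomorphic[of D1 R1 D2 R2] by (simp add: model_pair_def is_model_iff)
next
  fix D :: "'c set" and R
  assume "is_model D R T_as_irr"
  then show "infinite D" using as_irr_model.infinite_domain is_model_iff by blast
next
  fix D1 :: "'d set" and R1 and D2 :: "'e set" and R2 and \<phi>
  assume "is_model D1 R1 T_as_irr \<and> is_model D2 R2 T_as_irr \<and> sentence \<phi>"
  then show "holds D1 R1 \<phi> \<longleftrightarrow> holds D2 R2 \<phi>"
    using model_pair.holds_sentence_iff[of D1 R1 D2 R2 \<phi>] by (simp add: model_pair_def is_model_iff)
qed

end
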